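(* Let $S=S_1\times\cdots\times S_m\subseteq\mathbb{F}_q^m$ and let $\prec$ be an arbitrary (fixed) monomial ordering on monomials in $X_1,\dots,X_m$. Enumerate $\Delta(s_1,\dots,s_m)=\{N_1,\dots,N_n\}$ so that $N_1\prec N_2\prec\cdots\prec N_n$. Let $L_2\subsetneq L_1\subseteq\Delta(s_1,\dots,s_m)$. Then $C(L_1)$ and $C(L_2)$ have length $n$, $C(L_2)\subsetneq C(L_1)$, and $\dim C(L_1)-\dim C(L_2)=\#L_1-\#L_2$. Moreover, putting $u=\min\{i\mid N_i\in L_1\setminus L_2\}$ and $u^\perp=\max\{i\mid N_i\in L_1\}$, for every $v=1,\dots,\#L_1-\#L_2$: $$M_v(C(L_1),C(L_2))\ \ge\ \min\{D(K)\mid K\subseteq \{N_u,\dots,N_n\}\cap L_1,\ \#K=v\},$$ $$M_v(C(L_2)^\perp,C(L_1)^\perp)\ \ge\ \min\{D^\perp(K)\mid K\subseteq\{N_1,\dots,N_{u^\perp}\}\setminus L_2,\ \#K=v\}.$$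
   Context: $q$ is a prime power. For $i=1,\dots,m$, $S_i\subseteq\mathbb{F}_q$ is nonempty with $s_i=\#S_i$; $S=S_1\times\cdots\times S_m=\{\alpha_1,\dots,\alpha_n\}$ with $n=\prod_i s_i$ (fixed enumeration). $\Delta(s_1,\dots,s_m)=\{X_1^{i_1}\cdots X_m^{i_m}\mid 0\le i_t<s_t,\ t=1,\dots,m\}$. For $L\subseteq\Delta(s_1,\dots,s_m)$, $C(L)\subseteq\mathbb{F}_q^n$ is the $\mathbb{F}_q$-span of the vectors $(N(\alpha_1),\dots,N(\alpha_n))$ for $N\in L$. For a monomial $N=X_1^{i_1}\cdots X_m^{i_m}\in\Delta(s_1,\dots,s_m)$: $D(N)=\prod_{t=1}^m(s_t-i_t)$ and $D^\perp(N)=\prod_{t=1}^m(i_t+1)$; for $K\subseteq\Delta(s_1,\dots,s_m)$: $D(K)=\#\{N\in\Delta(s_1,\dots,s_m)\mid N\text{ is divisible by some }M\in K\}$ and $D^\perp(K)=\#\{N\in\Delta(s_1,\dots,s_m)\mid N\text{ divides some }M\in K\}$. $C^\perp$ denotes the dual with respect to the Euclidean inner product. For linear codes $C_2\subsetneq C_1\subseteq\mathbb{F}_q^n$ and $1\le v\le \dim C_1-\dim C_2$, the relative generalized Hamming weight is $M_v(C_1,C_2)=\min\{\#\mathrm{Supp}\,U\mid U\subseteq C_1 \text{ a subspace},\ \dim U=v,\ U\cap C_2=\{\vec 0\}\}$, where $\mathrm{Supp}\,U$ is the set of coordinate positions in which some codeword of $U$ is nonzero. ($M_1(C_1,C_2)=\min\{w_H(\vec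 c)\mid \vec c\in C_1\setminus C_2\}$.) *)

theory Defs
  imports Complex_Main "HOL-Library.Function_Algebras" "HOL-Library.FuncSet"
begin

definition vscale :: "'a::field \<Rightarrow> (nat \<Rightarrow> 'a) \<Rightarrow> (nat \<Rightarrow> 'a)" where
  "vscale c f = (\<lambda>j. c * f j)"

abbreviation fspan :: "(nat \<Rightarrow> 'a::field) set \<Rightarrow> (nat \<Rightarrow> 'a) set" where
  "fspan \<equiv> module.span vscale"

abbreviation fsubspace :: "(nat \<Rightarrow> 'a::field) set \<Rightarrow> bool" where
  "fsubspace \<equiv> module.subspace vscale"

abbreviation fdim :: "(nat \<Rightarrow> 'a::field) set \<Rightarrow> nat" where
  "fdim \<equiv> vector_space.dim vscale"

definition Vn :: "nat \<Rightarrow> (nat \<Rightarrow> 'a::field) set" where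
  "Vn n = {f. \<forall>j\<ge>n. f j = 0}"

definition dual :: "nat \<Rightarrow> (nat \<Rightarrow> 'a::field) set \<Rightarrow> (nat \<Rightarrow> 'a) set" where
  "dual n C = {c \<in> Vn n. \<forall>x\<in>C. (\<Sum>j<n. c j * x j) = 0}"

definition supp :: "(nat \<Rightarrow> 'a::zero) set \<Rightarrow> nat set" where
  "supp U = {j. \<exists>c\<in>U. c j \<noteq> 0}"

definition RGHW :: "nat \<Rightarrow> nat \<Rightarrow> (nat \<Rightarrow> 'a::field) set \<Rightarrow> (nat \<Rightarrow> 'a) set \<Rightarrow> nat" where
  "RGHW n v C1 C2 = Min {card (supp U) | U. fsubspace U \<and> U \<subseteq> C1 \<and> fdim U = v
                                         \<and> U \<inter> C2 = {0}}"

section \<open>Monomials in X_0..X_(m-1) as exponent vectors\<close>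

definition monoms :: "nat \<Rightarrow> (nat \<Rightarrow> nat) set" where
  "monoms m = {e. \<forall>i\<ge>m. e i = 0}"

definition Delta :: "nat \<Rightarrow> (nat \<Rightarrow> nat) \<Rightarrow> (nat \<Rightarrow> nat) set" where
  "Delta m s = {e. (\<forall>i<m. e i < s i) \<and> (\<forall>i\<ge>m. e i = 0)}"

definition mdvd :: "(nat \<Rightarrow> nat) \<Rightarrow> (nat \<Rightarrow> nat) \<Rightarrow> bool" where
  "mdvd a b \<longleftrightarrow> (\<forall>i. a i \<le> b i)"

definition DK :: "nat \<Rightarrow> (nat \<Rightarrow> nat) \<Rightarrow> (nat \<Rightarrow> nat) set \<Rightarrow> nat" where
  "DK m s K = card {N \<in> Delta m s. \<exists>M\<in>K. mdvd M N}"

definition DKperp :: "nat \<Rightarrow> (nat \<Rightarrow> nat) \<Rightarrow> (nat \<Rightarrow> nat) set \<Rightarrow> nat" where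
  "DKperp m s K = card {N \<in> Delta m s. \<exists>M\<in>K. mdvd N M}"

definition monomial_order :: "nat \<Rightarrow> ((nat \<Rightarrow> nat) \<Rightarrow> (nat \<Rightarrow> nat) \<Rightarrow> bool) \<Rightarrow> bool" where
  "monomial_order m lt \<longleftrightarrow>
     (\<forall>a\<in>monoms m. \<not> lt a a) \<and>
     (\<forall>a\<in>monoms m. \<forall>b\<in>monoms m. \<forall>c\<in>monoms m. lt a b \<longrightarrow> lt b c \<longrightarrow> lt a c) \<and>
     (\<forall>a\<in>monoms m. \<forall>b\<in>monoms m. a \<noteq> b \<longrightarrow> lt a b \<or> lt b a) \<and>
     (\<forall>a\<in>monoms m. a \<noteq> 0 \<longrightarrow> lt 0 a) \<and>
     (\<forall>a\<in>monoms m. \<forall>b\<in>monoms m. \<forall>c\<in>monoms m. lt a b \<longrightarrow> lt (a + c) (b + c))"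

text \<open>Points of S = S_1 x ... x S_m are elements of PiE {..<m} S.\<close>
definition mono_eval :: "nat \<Rightarrow> (nat \<Rightarrow> nat) \<Rightarrow> (nat \<Rightarrow> 'a::field) \<Rightarrow> 'a" where
  "mono_eval m e P = (\<Prod>i<m. P i ^ e i)"

definition evcode :: "nat \<Rightarrow> nat \<Rightarrow> (nat \<Rightarrow> nat \<Rightarrow> 'a::field) \<Rightarrow> (nat \<Rightarrow> nat) set \<Rightarrow> (nat \<Rightarrow> 'a) set" where
  "evcode m n alpha L = fspan ((\<lambda>e. (\<lambda>j. if j < n then mono_eval m e (alpha j) else 0)) ` L)"

end

theory Submission
  imports Defs "HOL-Computational_Algebra.Polynomial"
begin

text \<open>
  The evaluation vectors \<open>b\<^sub>k\<close> of the monomials \<open>N\<^sub>k\<close> of \<open>\<Delta>\<close> form a basis of \<open>F\<^sub>q\<^sup>n\<close>, and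
  reducing modulo the polynomials \<open>\<Prod>\<^bsub>a\<in>S\<^sub>i\<^esub> (X\<^sub>i - a)\<close> shows that the evaluation of any
  monomial \<open>M \<prec> N\<^sub>k\<close> lies in the span of the \<open>b\<^sub>i\<close> with \<open>i < k\<close>.
  For a subspace \<open>U \<subseteq> C(L\<^sub>1)\<close> meeting \<open>C(L\<^sub>2)\<close> trivially, the leading indices (largest
  nonzero \<open>b\<close>-coordinate) of its nonzero words lie in \<open>{u..n}\<close>, carry monomials of \<open>L\<^sub>1\<close>,
  and there are at least \<open>dim U\<close> of them.  If \<open>N\<^sub>k = E N\<^sub>h\<close> with \<open>h\<close> such a leading index,
  multiplying a word with leading index \<open>h\<close> by the evaluation of \<open>E\<close> gives a word with leading
  index \<open>k\<close> supported inside \<open>Supp U\<close>.  Words with distinct leading indices are independent, so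
  \<open>#Supp U\<close> is at least the number of multiples of the chosen monomials, i.e. \<open>D(K)\<close>.
  The dual bound is the same argument with the smallest \<open>k\<close> such that \<open>\<langle>c, b\<^sub>k\<rangle> \<noteq> 0\<close>
  and with divisors in place of multiples.
\<close>

section \<open>Vectors, inner products and triangular families\<close>

interpretation VS: vector_space "vscale :: 'a::field \<Rightarrow> (nat \<Rightarrow> 'a) \<Rightarrow> _"
  by unfold_locales (auto simp: vscale_def fun_eq_iff algebra_simps)

lemma vscale_apply: "vscale c f j = c * f j"
  by (simp add: vscale_def)

lemma mult_vscale: "x * vscale c y = vscale c (x * y)"
  by (simp add: fun_eq_iff vscale_apply mult.left_commute)

lemma sum_fun_apply: "(\<Sum>k\<in>K. f k) j = (\<Sum>k\<in>K. f k j)"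
  by (induction K rule: infinite_finite_induct) auto

lemma prod_fun_apply: "(\<Prod>k\<in>K. f k) j = (\<Prod>k\<in>K. f k j)"
  by (induction K rule: infinite_finite_induct) auto

definition dotp :: "nat \<Rightarrow> (nat \<Rightarrow> 'a::field) \<Rightarrow> (nat \<Rightarrow> 'a) \<Rightarrow> 'a" where
  "dotp n c x = (\<Sum>j<n. c j * x j)"

lemma dotp_commute: "dotp n c x = dotp n x c"
  by (simp add: dotp_def mult.commute)

lemma dotp_mult_left: "dotp n (e * c) x = dotp n c (e * x)"
  by (simp add: dotp_def mult_ac)

lemma dotp_add_right: "dotp n c (x + y) = dotp n c x + dotp n c y"
  by (simp add: dotp_def distrib_left sum.distrib)

lemma dotp_diff_right: "dotp n c (x - y) = dotp n c x - dotp n c y"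
  by (simp add: dotp_def right_diff_distrib sum_subtractf)

lemma dotp_scale_right: "dotp n c (vscale a x) = a * dotp n c x"
  by (simp add: dotp_def vscale_apply sum_distrib_left mult.left_commute)

lemma dotp_sum_right: "dotp n c (\<Sum>k\<in>J. vscale (a k) (y k)) = (\<Sum>k\<in>J. a k * dotp n c (y k))"
proof (induction J rule: infinite_finite_induct)
  case (insert k J)
  then show ?case by (simp only: sum.insert[OF insert.hyps(1,2)] dotp_add_right dotp_scale_right)
qed (simp_all add: dotp_def)

lemma dotp_span_right:
  assumes "x \<in> VS.span A" and "\<And>a. a \<in> A \<Longrightarrow> dotp n c a = 0"
  shows "dotp n c x = 0"
  using assms(1)
proof (induction rule: VS.span_induct_alt)
  case base
  show ?case by (simp add: dotp_def)
next
  case (step a x y)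
  then show ?case by (simp only: dotp_add_right dotp_scale_right assms(2)) simp
qed

lemma dual_eq: "dual n C = {c \<in> Vn n. \<forall>x\<in>C. dotp n c x = 0}"
  by (simp add: dual_def dotp_def)

lemma subspace_Vn: "VS.subspace (Vn n)"
  by (auto simp: VS.subspace_def Vn_def vscale_apply)

lemma subspace_dual: "VS.subspace (dual n C)"
proof (rule VS.subspaceI)
  show "0 \<in> dual n C" by (simp add: dual_def Vn_def)
next
  fix c d assume "c \<in> dual n C" "d \<in> dual n C"
  then show "c + d \<in> dual n C"
    by (simp add: dual_eq Vn_def dotp_commute[of n "c + d"] dotp_add_right)
      (simp add: dotp_commute)
next
  fix a c assume "c \<in> dual n C"
  then show "vscale a c \<in> dual n C"
    by (simp add: dual_eq Vn_def vscale_apply dotp_commute[of n "vscale a c"] dotp_scale_right)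
      (simp add: dotp_commute)
qed

lemma finite_Vn: "finite (Vn n :: (nat \<Rightarrow> 'a::{finite,field}) set)"
proof -
  have "Vn n \<subseteq> (\<lambda>g j. if j < n then g j else 0) ` PiE {..<n} (\<lambda>_. UNIV :: 'a set)"
  proof
    fix f :: "nat \<Rightarrow> 'a" assume "f \<in> Vn n"
    then show "f \<in> (\<lambda>g j. if j < n then g j else 0) ` PiE {..<n} (\<lambda>_. UNIV)"
      by (intro image_eqI[where x = "restrict f {..<n}"]) (auto simp: Vn_def fun_eq_iff)
  qed
  then show ?thesis by (rule finite_subset) (intro finite_imageI finite_PiE; simp)
qed

lemma supp_subset_Vn:
  assumes "U \<subseteq> Vn n"
  shows "supp U \<subseteq> {..<n}"
proof
  fix j assume "j \<in> supp U"
  then obtain c where c: "c \<in> U" "c j \<noteq> 0" by (auto simp: supp_def)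
  have "\<forall>i\<ge>n. c i = 0" using assms c(1) unfolding Vn_def by blast
  then show "j \<in> {..<n}" using c(2) by (auto simp: not_less[symmetric])
qed

lemma finite_supp: "U \<subseteq> Vn n \<Longrightarrow> finite (supp U)"
  by (rule finite_subset[OF supp_subset_Vn]) auto

definition unit_vec :: "nat \<Rightarrow> nat \<Rightarrow> 'a::field" where
  "unit_vec j = (\<lambda>i. if i = j then 1 else 0)"

lemma in_span_unit_vec:
  assumes "finite Z" and "\<And>j. j \<notin> Z \<Longrightarrow> x j = 0"
  shows "x \<in> VS.span (unit_vec ` Z)"
proof -
  have "x = (\<Sum>i\<in>Z. vscale (x i) (unit_vec i))"
  proof
    fix j
    have "(\<Sum>i\<in>Z. vscale (x i) (unit_vec i)) j = (\<Sum>i\<in>Z. if i = j then x j else 0)"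
      unfolding sum_fun_apply by (rule sum.cong) (auto simp: vscale_apply unit_vec_def)
    then show "x j = (\<Sum>i\<in>Z. vscale (x i) (unit_vec i)) j"
      using assms by (cases "j \<in> Z") auto
  qed
  also have "\<dots> \<in> VS.span (unit_vec ` Z)"
    by (intro VS.span_sum VS.span_scale VS.span_base imageI)
  finally show ?thesis .
qed

lemma dotp_unit_vec: "j < n \<Longrightarrow> dotp n c (unit_vec j) = c j"
  by (simp add: dotp_def unit_vec_def if_distrib[of "(*) _"] cong: if_cong)

lemma card_independent_supported_le:
  fixes X :: "(nat \<Rightarrow> 'a::field) set"
  assumes "VS.independent X" and "finite Z" and "\<And>x j. x \<in> X \<Longrightarrow> j \<notin> Z \<Longrightarrow> x j = 0"
  shows "card X \<le> card Z"
proof -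
  have sub: "X \<subseteq> VS.span (unit_vec ` Z)"
  proof
    fix x assume "x \<in> X"
    then show "x \<in> VS.span (unit_vec ` Z)"
      by (intro in_span_unit_vec[OF assms(2)] assms(3))
  qed
  have "finite (unit_vec ` Z :: (nat \<Rightarrow> 'a) set)"
    using assms(2) by simp
  from VS.independent_span_bound[OF this assms(1) sub]
  have "card X \<le> card (unit_vec ` Z :: (nat \<Rightarrow> 'a) set)" by (rule conjunct2)
  also have "\<dots> \<le> card Z"
    using assms(2) by (rule card_image_le)
  finally show ?thesis .
qed

lemma dim_le_card_if_separating:
  fixes U :: "(nat \<Rightarrow> 'a::field) set" and g :: "nat \<Rightarrow> nat \<Rightarrow> 'a"
  assumes U: "VS.subspace U" and H: "finite H"
    and sep: "\<And>c. c \<in> U \<Longrightarrow> c \<noteq> 0 \<Longrightarrow> \<exists>k\<in>H. dotp n (g k) c \<noteq> 0"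
  shows "fdim U \<le> card H"
proof -
  define P where "P x = (\<lambda>k. if k \<in> H then dotp n (g k) x else 0)" for x :: "nat \<Rightarrow> 'a"
  interpret P: Vector_Spaces.linear vscale vscale P
  proof unfold_locales
    show "P (x + y) = P x + P y" "P (vscale r x) = vscale r (P x)" for x y r
      by (simp_all add: P_def fun_eq_iff dotp_add_right dotp_scale_right vscale_apply)
  qed
  obtain B where B: "B \<subseteq> U" "VS.independent B" "card B = fdim U"
    by (meson VS.basis_exists)
  have inj: "inj_on P (VS.span B)"
  proof (rule inj_onI)
    fix x y assume xy: "x \<in> VS.span B" "y \<in> VS.span B" "P x = P y"
    have "VS.span B \<subseteq> U" using VS.span_minimal[OF B(1) U] .
    then have "x - y \<in> U" using xy(1,2) by (intro VS.subspace_diff[OF U]) auto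
    moreover have "dotp n (g k) (x - y) = 0" if "k \<in> H" for k
      using fun_cong[OF xy(3), of k] that by (simp add: P_def dotp_diff_right)
    ultimately have "x - y = 0" using sep[of "x - y"] by auto
    then show "x = y" by simp
  qed
  then have indep: "VS.independent (P ` B)"
    using P.dependent_inj_imageD[OF _ inj] B(2) by auto
  have "card (P ` B) \<le> card H"
    by (rule card_independent_supported_le[OF indep H]) (auto simp: P_def)
  moreover have "card (P ` B) = card B"
    by (rule card_image[OF inj_on_subset[OF inj VS.span_superset]])
  ultimately show ?thesis
    using B(3) by simp
qed

text \<open>The weight \<open>w\<close> only orders \<open>D\<close>; a decreasing \<open>w\<close> turns upper into lower
  triangularity.\<close>
lemma triangular_combination_zero:
  fixes x g :: "nat \<Rightarrow> nat \<Rightarrow> 'a::field" and w :: "nat \<Rightarrow> nat"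
  assumes D: "finite D" and w: "inj_on w D"
    and diag: "\<And>k. k \<in> D \<Longrightarrow> dotp n (g k) (x k) \<noteq> 0"
    and upper: "\<And>k k'. k \<in> D \<Longrightarrow> k' \<in> D \<Longrightarrow> w k < w k' \<Longrightarrow> dotp n (g k') (x k) = 0"
    and comb: "(\<Sum>k\<in>D. vscale (a k) (x k)) = 0"
  shows "\<forall>k\<in>D. a k = 0"
proof (rule ccontr)
  define A where "A = {k \<in> D. a k \<noteq> 0}"
  assume "\<not> (\<forall>k\<in>D. a k = 0)"
  then have "A \<noteq> {}" "finite A" using D by (auto simp: A_def)
  then obtain k0 where k0: "k0 \<in> A" "w k0 = Max (w ` A)"
    by (metis (mono_tags, lifting) Max_in finite_imageI image_iff image_is_empty)
  then have k0D: "k0 \<in> D" by (simp add: A_def)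
  have other: "dotp n (g k0) (x k) = 0" if "k \<in> A" "k \<noteq> k0" for k
  proof -
    have "w k \<le> w k0" using that k0 \<open>finite A\<close> by simp
    moreover have "w k \<noteq> w k0" using that k0 w by (auto simp: A_def inj_on_def)
    ultimately show ?thesis using upper that k0 by (auto simp: A_def)
  qed
  have "0 = dotp n (g k0) (\<Sum>k\<in>D. vscale (a k) (x k))"
    using comb by (simp add: dotp_def)
  also have "\<dots> = a k0 * dotp n (g k0) (x k0) + (\<Sum>k\<in>D - {k0}. a k * dotp n (g k0) (x k))"
    by (simp only: sum.remove[OF D k0D] dotp_add_right dotp_scale_right dotp_sum_right)
  also have "(\<Sum>k\<in>D - {k0}. a k * dotp n (g k0) (x k)) = 0"
    using other by (intro sum.neutral) (auto simp: A_def)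
  finally show False
    using diag[of k0] k0(1) by (auto simp: A_def)
qed

lemma independent_if_triangular:
  fixes x g :: "nat \<Rightarrow> nat \<Rightarrow> 'a::field" and w :: "nat \<Rightarrow> nat"
  assumes D: "finite D" and w: "inj_on w D"
    and diag: "\<And>k. k \<in> D \<Longrightarrow> dotp n (g k) (x k) \<noteq> 0"
    and upper: "\<And>k k'. k \<in> D \<Longrightarrow> k' \<in> D \<Longrightarrow> w k < w k' \<Longrightarrow> dotp n (g k') (x k) = 0"
  shows "VS.independent (x ` D)" and "inj_on x D"
proof -
  show inj: "inj_on x D"
  proof (rule inj_onI, rule ccontr)
    fix k k' assume kk': "k \<in> D" "k' \<in> D" "x k = x k'" "k \<noteq> k'"
    then have "w k < w k' \<or> w k' < w k" using w by (metis inj_onD linorder_neqE_nat)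
    then show False using upper[of k k'] upper[of k' k] diag[of k] diag[of k'] kk' by auto
  qed
  show "VS.independent (x ` D)"
  proof (rule VS.independent_if_scalars_zero)
    fix f y assume comb: "(\<Sum>v\<in>x ` D. vscale (f v) v) = 0" and y: "y \<in> x ` D"
    have "(\<Sum>k\<in>D. vscale (f (x k)) (x k)) = 0"
      using comb by (simp add: sum.reindex[OF inj])
    then show "f y = 0"
      using triangular_combination_zero[where a = "\<lambda>k. f (x k)" and x = x and g = g
          and w = w and n = n and D = D] D w diag upper y by blast
  qed (use D in simp)
qed

lemma card_le_card_if_triangular_supported:
  fixes x g :: "nat \<Rightarrow> nat \<Rightarrow> 'a::field" and w :: "nat \<Rightarrow> nat"
  assumes D: "finite D" and w: "inj_on w D"
    and diag: "\<And>k. k \<in> D \<Longrightarrow> dotp n (g k) (x k) \<noteq> 0"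
    and upper: "\<And>k k'. k \<in> D \<Longrightarrow> k' \<in> D \<Longrightarrow> w k < w k' \<Longrightarrow> dotp n (g k') (x k) = 0"
    and Z: "finite Z" "\<And>k j. k \<in> D \<Longrightarrow> j \<notin> Z \<Longrightarrow> x k j = 0"
  shows "card D \<le> card Z"
proof -
  note tri = independent_if_triangular[where x = x and g = g and w = w and n = n and D = D,
      OF D w diag upper]
  have "card (x ` D) \<le> card Z"
    using card_independent_supported_le[OF tri(1) Z(1)] Z(2) by blast
  then show ?thesis using card_image[OF tri(2)] by simp
qed

lemma mult_in_span:
  assumes x: "x \<in> VS.span A" and y: "y \<in> VS.span B"
    and AB: "\<And>a c. a \<in> A \<Longrightarrow> c \<in> B \<Longrightarrow> a * c \<in> VS.span C"
  shows "x * y \<in> VS.span C"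
proof -
  have vscale_mult: "vscale c u * v = vscale c (u * v)" for c and u v :: "nat \<Rightarrow> 'a"
    by (simp add: fun_eq_iff vscale_apply mult_ac)
  have ay: "a * y \<in> VS.span C" if "a \<in> A" for a
    using y
  proof (induction rule: VS.span_induct_alt)
    case (step c u v)
    then show ?case
      using AB[OF that] by (simp only: distrib_left mult_vscale) (intro VS.span_add VS.span_scale)
  qed (simp only: mult_zero_right VS.span_zero)
  show ?thesis
    using x
  proof (induction rule: VS.span_induct_alt)
    case (step c u v)
    then show ?case
      using ay by (simp only: distrib_right vscale_mult) (intro VS.span_add VS.span_scale)
  qed (simp only: mult_zero_left VS.span_zero)
qed

lemma power_card_in_lower_powers:
  fixes A :: "'a::field set"
  assumes "finite A"
  obtains c where "\<And>x. x \<in> A \<Longrightarrow> x ^ card A = (\<Sum>k<card A. c k * x ^ k)"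
proof
  define p where "p = (\<Prod>a\<in>A. [:-a, 1:])"
  have deg: "degree p = card A" unfolding p_def by (subst degree_prod_sum_eq) auto
  have lc: "coeff p (card A) = 1"
    using lead_coeff_prod[of "\<lambda>a. [:-a,1:]" A] deg unfolding p_def by simp
  fix x assume x: "x \<in> A"
  have "poly p x = 0"
    unfolding p_def poly_prod using x assms by (auto intro: prod_zero)
  then have "0 = (\<Sum>i\<le>card A. coeff p i * x^i)" using poly_altdef[of p x] deg by simp
  also have "\<dots> = (\<Sum>i<card A. coeff p i * x^i) + x ^ card A"
    by (simp add: lessThan_Suc_atMost[symmetric] lc)
  finally show "x ^ card A = (\<Sum>k<card A. - coeff p k * x ^ k)"
    by (simp add: sum_negf eq_neg_iff_add_eq_0 add.commute)
qed

lemma Min_le_Min_if_dominated: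
  fixes A B :: "'a::linorder set"
  assumes "finite A" "A \<noteq> {}" "finite B" "\<And>a. a \<in> A \<Longrightarrow> \<exists>b\<in>B. b \<le> a"
  shows "Min B \<le> Min A"
proof -
  obtain b where "b \<in> B" "b \<le> Min A" using assms(4)[OF Min_in[OF assms(1,2)]] by blast
  then show ?thesis using Min_le[OF assms(3)] order_trans by blast
qed

section \<open>Evaluation codes\<close>

locale affine_variety_code =
  fixes m n :: nat
    and s :: "nat \<Rightarrow> nat"
    and S :: "nat \<Rightarrow> 'a::{finite,field} set"
    and alpha :: "nat \<Rightarrow> nat \<Rightarrow> 'a"
    and lt :: "(nat \<Rightarrow> nat) \<Rightarrow> (nat \<Rightarrow> nat) \<Rightarrow> bool"
    and N :: "nat \<Rightarrow> (nat \<Rightarrow> nat)"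
  assumes s_def: "\<forall>i<m. s i = card (S i)"
    and alpha_enum: "bij_betw alpha {..<n} (PiE {..<m} S)"
    and mono_ord: "monomial_order m lt"
    and N_enum: "bij_betw N {1..n} (Delta m s)"
    and N_sorted: "\<forall>i\<in>{1..n}. \<forall>j\<in>{1..n}. i < j \<longrightarrow> lt (N i) (N j)"
begin

definition ev :: "(nat \<Rightarrow> nat) \<Rightarrow> nat \<Rightarrow> 'a" where
  "ev e = (\<lambda>j. if j < n then mono_eval m e (alpha j) else 0)"

text \<open>Coordinates of vectors run over \<open>{..<n}\<close> (the points \<open>alpha j\<close>), whereas the basis
  vectors \<open>b k\<close> and all index sets below run over \<open>{1..n}\<close> (the monomials \<open>N k\<close>).\<close>
abbreviation b :: "nat \<Rightarrow> nat \<Rightarrow> 'a" where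
  "b k \<equiv> ev (N k)"

lemma evcode_eq: "evcode m n alpha L = VS.span (ev ` L)"
  by (simp add: evcode_def ev_def)

lemma ev_Vn: "ev e \<in> Vn n"
  by (simp add: ev_def Vn_def)

lemma evcode_subset_Vn: "evcode m n alpha L \<subseteq> Vn n"
  unfolding evcode_eq using ev_Vn by (intro VS.span_minimal subspace_Vn) auto

lemma ev_add: "ev (e + e') = ev e * ev e'"
  by (auto simp: fun_eq_iff ev_def mono_eval_def power_add prod.distrib)

lemma alpha_mem: "j < n \<Longrightarrow> i < m \<Longrightarrow> alpha j i \<in> S i"
  using alpha_enum by (auto simp: bij_betw_def PiE_def Pi_def)

lemma Delta_subset_monoms: "Delta m s \<subseteq> monoms m"
  by (auto simp: Delta_def monoms_def)

lemma N_Delta: "k \<in> {1..n} \<Longrightarrow> N k \<in> Delta m s"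
  using N_enum by (auto simp: bij_betw_def)

lemma N_monoms: "k \<in> {1..n} \<Longrightarrow> N k \<in> monoms m"
  using N_Delta Delta_subset_monoms by auto

lemma inj_N: "inj_on N {1..n}"
  using N_enum by (auto simp: bij_betw_def)

lemma image_N: "N ` {1..n} = Delta m s"
  using N_enum by (auto simp: bij_betw_def)

lemma finite_Delta: "finite (Delta m s)"
  using image_N finite_imageI[of "{1..n}" N] by simp

lemma lt_trans: "a \<in> monoms m \<Longrightarrow> c \<in> monoms m \<Longrightarrow> d \<in> monoms m \<Longrightarrow> lt a c \<Longrightarrow> lt c d \<Longrightarrow> lt a d"
  using mono_ord unfolding monomial_order_def by blast

lemma lt_add_left: "a \<in> monoms m \<Longrightarrow> c \<in> monoms m \<Longrightarrow> d \<in> monoms m \<Longrightarrow> lt a c \<Longrightarrow> lt (d + a) (d + c)"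
  using mono_ord unfolding monomial_order_def by (metis add.commute)

lemma lt_if_mdvd:
  assumes "E1 \<in> monoms m" "E2 \<in> monoms m" "mdvd E1 E2" "E1 \<noteq> E2"
  shows "lt E1 E2"
proof -
  define d where "d = (\<lambda>i. E2 i - E1 i)"
  have d: "d \<in> monoms m" using assms(2) by (auto simp: d_def monoms_def)
  have E2: "E2 = E1 + d" using assms(3) by (auto simp: d_def mdvd_def fun_eq_iff)
  then have "d \<noteq> 0" using assms(4) by auto
  then have "lt 0 d" using mono_ord d unfolding monomial_order_def by blast
  then have "lt (E1 + 0) (E1 + d)"
    using lt_add_left[of 0 d E1] d assms(1) by (auto simp: monoms_def)
  then show ?thesis using E2 by simp
qed

lemma lt_N_iff:
  assumes "k \<in> {1..n}" "k' \<in> {1..n}"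
  shows "lt (N k) (N k') \<longleftrightarrow> k < k'"
proof
  assume lt: "lt (N k) (N k')"
  have irrefl: "\<not> lt a a" if "a \<in> monoms m" for a
    using mono_ord that by (auto simp: monomial_order_def)
  show "k < k'"
  proof (rule ccontr)
    assume "\<not> k < k'"
    then have "k = k' \<or> lt (N k') (N k)" by (metis N_sorted assms linorder_neqE_nat)
    then show False
      using lt lt_trans[of "N k" "N k'" "N k"] irrefl N_monoms assms by blast
  qed
qed (use N_sorted assms in auto)

lemma ev_eq_sum_lowered:
  assumes i: "i < m" "s i \<le> E i"
  obtains c where "ev E = (\<Sum>k<s i. vscale (c k) (ev (E(i := E i - s i + k))))"
proof -
  obtain c where c: "\<And>x. x \<in> S i \<Longrightarrow> x ^ s i = (\<Sum>k<s i. c k * x ^ k)"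
    using power_card_in_lower_powers[of "S i"] s_def i(1) by auto
  have "mono_eval m E P = (\<Sum>k<s i. c k * mono_eval m (E(i := E i - s i + k)) P)"
    if P: "P i \<in> S i" for P :: "nat \<Rightarrow> 'a"
  proof -
    define R where "R = (\<Prod>i'\<in>{..<m}-{i}. P i' ^ E i')"
    have split: "mono_eval m E' P = P i ^ E' i * R" if "\<forall>i'. i' \<noteq> i \<longrightarrow> E' i' = E i'" for E'
      using i(1) that by (simp add: mono_eval_def R_def prod.remove)
    have "P i ^ E i = P i ^ (E i - s i) * P i ^ s i"
      using i(2) by (simp add: power_add[symmetric])
    also have "\<dots> = (\<Sum>k<s i. c k * P i ^ (E i - s i + k))"
      using c P by (simp add: sum_distrib_left power_add mult_ac)
    finally show ?thesis
      by (simp add: split sum_distrib_right mult.assoc)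
  qed
  then have "ev E = (\<Sum>k<s i. vscale (c k) (ev (E(i := E i - s i + k))))"
    using alpha_mem i(1) by (auto simp: fun_eq_iff sum_fun_apply ev_def vscale_apply)
  then show thesis ..
qed

lemma ev_in_span_divisors:
  assumes "E \<in> monoms m"
  shows "ev E \<in> VS.span (ev ` {E' \<in> Delta m s. mdvd E' E})"
  using assms
proof (induction "\<Sum>i<m. E i" arbitrary: E rule: less_induct)
  case less
  show ?case
  proof (cases "E \<in> Delta m s")
    case True
    then show ?thesis by (intro VS.span_base) (auto simp: mdvd_def)
  next
    case False
    then obtain i where i: "i < m" "s i \<le> E i"
      using less.prems by (auto simp: Delta_def monoms_def not_less)
    obtain c where c: "ev E = (\<Sum>k<s i. vscale (c k) (ev (E(i := E i - s i + k))))"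
      using ev_eq_sum_lowered[where i = i and E = E, OF i] .
    have "ev (E(i := E i - s i + k)) \<in> VS.span (ev ` {E' \<in> Delta m s. mdvd E' E})"
      if k: "k < s i" for k
    proof -
      let ?E = "E(i := E i - s i + k)"
      have "(\<Sum>i'<m. ?E i') < (\<Sum>i'<m. E i')"
        using i k by (simp add: sum.remove[of "{..<m}" i])
      moreover have "?E \<in> monoms m" using less.prems i(1) by (auto simp: monoms_def)
      ultimately have "ev ?E \<in> VS.span (ev ` {E' \<in> Delta m s. mdvd E' ?E})"
        using less.hyps by blast
      moreover have "{E' \<in> Delta m s. mdvd E' ?E} \<subseteq> {E' \<in> Delta m s. mdvd E' E}"
        using k i(2) by (auto simp: mdvd_def split: if_splits intro: order_trans)
      ultimately show ?thesis by (meson VS.span_mono image_mono subsetD)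
    qed
    then show ?thesis unfolding c by (intro VS.span_sum VS.span_scale) auto
  qed
qed

lemma ev_in_span_lower:
  assumes M: "M \<in> monoms m" and k: "k \<in> {1..n}" and lt: "lt M (N k)"
  shows "ev M \<in> VS.span (b ` {i \<in> {1..n}. i < k})"
proof -
  have "ev ` {E' \<in> Delta m s. mdvd E' M} \<subseteq> b ` {i \<in> {1..n}. i < k}"
  proof
    fix x assume "x \<in> ev ` {E' \<in> Delta m s. mdvd E' M}"
    then obtain E' where E': "E' \<in> Delta m s" "mdvd E' M" "x = ev E'" by blast
    then obtain i where "i \<in> {1..n}" "E' = N i" using image_N by (metis imageE)
    with E' have i: "i \<in> {1..n}" "mdvd (N i) M" "x = b i" by simp_all
    have "lt (N i) (N k)"
      using lt_if_mdvd[OF N_monoms[OF i(1)] M i(2)] lt lt_trans[OF N_monoms[OF i(1)] M N_monoms[OF k]]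
      by (cases "N i = M") auto
    then show "x \<in> b ` {i \<in> {1..n}. i < k}" using i k lt_N_iff by auto
  qed
  then show ?thesis using ev_in_span_divisors[OF M] VS.span_mono by blast
qed

lemma image_b: "b ` {1..n} = ev ` Delta m s"
  by (simp add: image_N[symmetric] image_image)

lemma span_ev_monoms_mult:
  assumes "x \<in> VS.span (ev ` monoms m)" "y \<in> VS.span (ev ` monoms m)"
  shows "x * y \<in> VS.span (ev ` monoms m)"
  using assms by (rule mult_in_span) (auto simp: ev_add[symmetric] monoms_def intro!: VS.span_base)

lemma affine_eval_in_span:
  assumes "i < m"
  shows "(\<lambda>j. if j < n then r * (alpha j i - a) else 0) \<in> VS.span (ev ` monoms m)"
proof -
  define X :: "nat \<Rightarrow> nat" where "X = (\<lambda>i'. if i' = i then 1 else 0)"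
  have "(\<Prod>i'<m. P i' ^ X i') = (\<Prod>i'<m. if i' = i then P i' else 1)" for P :: "nat \<Rightarrow> 'a"
    by (rule prod.cong) (auto simp: X_def)
  then have "(\<Prod>i'<m. P i' ^ X i') = P i" for P :: "nat \<Rightarrow> 'a"
    using assms by simp
  then have eq: "(\<lambda>j. if j < n then r * (alpha j i - a) else 0) = vscale r (ev X - vscale a (ev 0))"
    by (simp add: fun_eq_iff ev_def mono_eval_def vscale_apply right_diff_distrib)
  have "X \<in> monoms m" "0 \<in> monoms m" using assms by (auto simp: X_def monoms_def)
  then show ?thesis
    unfolding eq by (intro VS.span_scale VS.span_diff VS.span_base imageI)
qed

lemma ev_0_mult_prod_in_span:
  assumes "finite I" "\<And>p. p \<in> I \<Longrightarrow> g p \<in> VS.span (ev ` monoms m)"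
  shows "ev 0 * prod g I \<in> VS.span (ev ` monoms m)"
  using assms
proof (induction I rule: finite_induct)
  case empty
  show ?case by (simp add: monoms_def VS.span_base)
next
  case (insert p F)
  have "ev 0 * prod g (insert p F) = g p * (ev 0 * prod g F)"
    by (simp only: prod.insert[OF insert.hyps] mult_ac)
  moreover have "g p \<in> VS.span (ev ` monoms m)" using insert.prems by simp
  moreover have "ev 0 * prod g F \<in> VS.span (ev ` monoms m)"
    by (rule insert.IH) (use insert.prems in simp)
  ultimately show ?case using span_ev_monoms_mult by metis
qed

text \<open>Lagrange interpolation: the indicator of the point \<open>alpha j0\<close> is the product of the
  factors \<open>(X\<^sub>i - a) / (alpha j0 i - a)\<close> over \<open>i < m\<close> and \<open>a \<in> S i - {alpha j0 i}\<close>.\<close>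
lemma unit_vec_in_span_ev:
  assumes j0: "j0 < n"
  shows "unit_vec j0 \<in> VS.span (ev ` monoms m)"
proof -
  define I where "I = {(i, a). i < m \<and> a \<in> S i \<and> a \<noteq> alpha j0 i}"
  define g where "g p = (\<lambda>j. if j < n then inverse (alpha j0 (fst p) - snd p) * (alpha j (fst p) - snd p)
                            else 0)" for p
  have "finite I"
    by (rule finite_subset[of _ "{..<m} \<times> UNIV"]) (auto simp: I_def)
  have "g p \<in> VS.span (ev ` monoms m)" if "p \<in> I" for p
    using that unfolding g_def by (intro affine_eval_in_span) (auto simp: I_def)
  with \<open>finite I\<close> have "ev 0 * prod g I \<in> VS.span (ev ` monoms m)"
    by (rule ev_0_mult_prod_in_span)
  moreover have "unit_vec j0 = ev 0 * prod g I"
  proof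
    fix j
    show "unit_vec j0 j = (ev 0 * prod g I) j"
    proof (cases "j < n")
      case True
      show ?thesis
      proof (cases "j = j0")
        case True
        then show ?thesis
          using \<open>j < n\<close> by (auto simp: unit_vec_def ev_def mono_eval_def prod_fun_apply g_def I_def
              intro!: prod.neutral)
      next
        case False
        have "alpha j \<noteq> alpha j0" "alpha j \<in> PiE {..<m} S" "alpha j0 \<in> PiE {..<m} S"
          using alpha_enum \<open>j < n\<close> j0 False by (auto simp: bij_betw_def inj_on_def)
        then obtain i where i: "i < m" "alpha j i \<noteq> alpha j0 i"
          by (metis PiE_ext lessThan_iff)
        then have "(i, alpha j i) \<in> I" using alpha_mem \<open>j < n\<close> by (auto simp: I_def)
        moreover have "g (i, alpha j i) j = 0" using \<open>j < n\<close> by (simp add: g_def)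
        ultimately have "(\<Prod>p\<in>I. g p j) = 0"
          using \<open>finite I\<close> by (intro prod_zero bexI[of _ "(i, alpha j i)"])
        then show ?thesis using False by (simp add: unit_vec_def prod_fun_apply)
      qed
    qed (use j0 in \<open>auto simp: unit_vec_def ev_def\<close>)
  qed
  ultimately show ?thesis by simp
qed

lemma Vn_subset_span_b: "Vn n \<subseteq> VS.span (b ` {1..n})"
proof -
  have "ev ` monoms m \<subseteq> VS.span (b ` {1..n})"
  proof
    fix x assume "x \<in> ev ` monoms m"
    then obtain E where "E \<in> monoms m" "x = ev E" by blast
    moreover have "ev ` {E' \<in> Delta m s. mdvd E' E} \<subseteq> b ` {1..n}"
      using image_b by auto
    ultimately show "x \<in> VS.span (b ` {1..n})"
      using ev_in_span_divisors VS.span_mono by blast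
  qed
  then have "VS.span (ev ` monoms m) \<subseteq> VS.span (b ` {1..n})"
    by (intro VS.span_minimal) auto
  then have "unit_vec ` {..<n} \<subseteq> VS.span (b ` {1..n})"
    using unit_vec_in_span_ev by blast
  moreover have "Vn n \<subseteq> VS.span (unit_vec ` {..<n})"
    using in_span_unit_vec[of "{..<n}"] by (auto simp: Vn_def not_less)
  ultimately show ?thesis
    by (meson VS.span_minimal VS.subspace_span order_trans)
qed

lemma eq_0_if_dotp_b_eq_0:
  assumes c: "c \<in> Vn n" and z: "\<And>k. k \<in> {1..n} \<Longrightarrow> dotp n c (b k) = 0"
  shows "c = 0"
proof
  fix j
  show "c j = 0 j"
  proof (cases "j < n")
    case True
    have "unit_vec j \<in> VS.span (b ` {1..n})"
      using Vn_subset_span_b True by (auto simp: Vn_def unit_vec_def)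
    then have "dotp n c (unit_vec j) = 0" using z by (auto intro: dotp_span_right)
    then show ?thesis using dotp_unit_vec[OF True, of c] by simp
  qed (use c in \<open>simp add: Vn_def\<close>)
qed

text \<open>Since \<open>F\<^sub>q\<^sup>n\<close> is finite, injectivity of \<open>c \<mapsto> (\<langle>c, b\<^sub>k\<rangle>)\<^sub>k\<close> already gives
  surjectivity, hence a dual basis.\<close>
lemma exists_dual_basis:
  "\<exists>d. \<forall>i\<in>{1..n}. d i \<in> Vn n \<and> (\<forall>k\<in>{1..n}. dotp n (d i) (b k) = (if k = i then 1 else 0))"
proof -
  define T where "T c = (\<lambda>k. if k < n then dotp n c (b (Suc k)) else 0)" for c
  have "inj_on T (Vn n)"
  proof (rule inj_onI)
    fix x y assume xy: "x \<in> Vn n" "y \<in> Vn n" "T x = T y"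
    have "dotp n (x - y) (b k) = 0" if "k \<in> {1..n}" for k
    proof -
      have "Suc (k - 1) = k" "k - 1 < n" using that by auto
      then have "dotp n x (b k) = dotp n y (b k)"
        using fun_cong[OF xy(3), of "k - 1"] by (simp add: T_def)
      then show ?thesis by (simp add: dotp_def left_diff_distrib sum_subtractf)
    qed
    then have "x - y = 0"
      using xy(1,2) by (intro eq_0_if_dotp_b_eq_0) (auto simp: Vn_def)
    then show "x = y" by simp
  qed
  moreover have "T ` Vn n \<subseteq> Vn n" by (auto simp: T_def Vn_def)
  ultimately have surj: "T ` Vn n = Vn n" by (intro endo_inj_surj finite_Vn)
  have "\<exists>c\<in>Vn n. T c = unit_vec (i - 1)" if "i \<in> {1..n}" for i
  proof -
    have "unit_vec (i - 1) \<in> T ` Vn n" using that surj by (auto simp: Vn_def unit_vec_def)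
    then show ?thesis by (metis imageE)
  qed
  then obtain d where d: "\<And>i. i \<in> {1..n} \<Longrightarrow> d i \<in> Vn n \<and> T (d i) = unit_vec (i - 1)"
    by metis
  have "dotp n (d i) (b k) = (if k = i then 1 else 0)" if "i \<in> {1..n}" "k \<in> {1..n}" for i k
  proof -
    have "Suc (k - 1) = k" "k - 1 < n" "k - 1 = i - 1 \<longleftrightarrow> k = i" using that by auto
    then show ?thesis
      using fun_cong[OF conjunct2[OF d[OF that(1)]], of "k - 1"] by (simp add: T_def unit_vec_def)
  qed
  then show ?thesis using d by blast
qed

section \<open>Coordinates and leading indices\<close>

text \<open>\<open>dotp n (db i) c\<close> is the \<open>i\<close>-th coordinate of \<open>c\<close> with respect to the basis \<open>b\<close>.\<close>
definition db :: "nat \<Rightarrow> nat \<Rightarrow> 'a" where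
  "db = (SOME d. \<forall>i\<in>{1..n}. d i \<in> Vn n \<and>
                   (\<forall>k\<in>{1..n}. dotp n (d i) (b k) = (if k = i then 1 else 0)))"

lemma db_Vn: "i \<in> {1..n} \<Longrightarrow> db i \<in> Vn n"
  and dotp_db_b: "i \<in> {1..n} \<Longrightarrow> k \<in> {1..n} \<Longrightarrow> dotp n (db i) (b k) = (if k = i then 1 else 0)"
  using someI_ex[OF exists_dual_basis] by (simp_all add: db_def)

lemma independent_b: "VS.independent (b ` {1..n})"
  and inj_b: "inj_on b {1..n}"
  by (rule independent_if_triangular[where g = db and w = id and n = n];
      simp add: dotp_db_b)+

lemma independent_db: "VS.independent (db ` {1..n})"
  and inj_db: "inj_on db {1..n}"
  by (rule independent_if_triangular[where g = b and w = id and n = n];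
      simp add: dotp_commute[of n "b _"] dotp_db_b)+

lemma inj_ev: "inj_on ev (Delta m s)"
proof (rule inj_onI)
  fix e e' assume "e \<in> Delta m s" "e' \<in> Delta m s" "ev e = ev e'"
  then obtain k k' where "k \<in> {1..n}" "k' \<in> {1..n}" "e = N k" "e' = N k'" "b k = b k'"
    using image_N by (metis imageE)
  moreover have "k = k'" by (rule inj_onD[OF inj_b]) fact+
  ultimately show "e = e'" by simp
qed

lemma dim_evcode:
  assumes "L \<subseteq> Delta m s"
  shows "fdim (evcode m n alpha L) = card L"
proof -
  have "ev ` L \<subseteq> b ` {1..n}" using assms image_b by auto
  then have "VS.independent (ev ` L)" by (rule VS.independent_mono[OF independent_b])
  then have "fdim (evcode m n alpha L) = card (ev ` L)"
    unfolding evcode_eq by (rule VS.dim_span_eq_card_independent)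
  also have "\<dots> = card L" using card_image[OF inj_on_subset[OF inj_ev assms]] .
  finally show ?thesis .
qed

lemma b_expansion:
  assumes "c \<in> Vn n"
  shows "c = (\<Sum>i\<in>{1..n}. vscale (dotp n (db i) c) (b i))"
proof -
  have "c \<in> VS.span (b ` {1..n})" using assms Vn_subset_span_b by blast
  then obtain u where "c = (\<Sum>v\<in>b ` {1..n}. vscale (u v) v)"
    unfolding VS.span_finite[OF finite_imageI[OF finite_atLeastAtMost]] by blast
  then have c: "c = (\<Sum>i\<in>{1..n}. vscale (u (b i)) (b i))"
    by (simp only: sum.reindex[OF inj_b] comp_def)
  have "dotp n (db k) c = u (b k)" if "k \<in> {1..n}" for k
  proof -
    have "dotp n (db k) c = (\<Sum>i\<in>{1..n}. u (b i) * (if i = k then 1 else 0))"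
      using that by (subst c) (simp add: dotp_sum_right dotp_db_b)
    also have "\<dots> = u (b k)" using that by (simp add: if_distrib[of "(*) _"] cong: if_cong)
    finally show ?thesis .
  qed
  then have "(\<Sum>i\<in>{1..n}. vscale (dotp n (db i) c) (b i)) = (\<Sum>i\<in>{1..n}. vscale (u (b i)) (b i))"
    by (intro sum.cong) simp_all
  then show ?thesis using trans[OF c sym] by blast
qed

lemma in_span_b_iff:
  assumes I: "I \<subseteq> {1..n}" and c: "c \<in> Vn n"
  shows "c \<in> VS.span (b ` I) \<longleftrightarrow> (\<forall>k\<in>{1..n} - I. dotp n (db k) c = 0)"
proof
  assume c_span: "c \<in> VS.span (b ` I)"
  show "\<forall>k\<in>{1..n} - I. dotp n (db k) c = 0"
  proof
    fix k assume "k \<in> {1..n} - I"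
    with c_span show "dotp n (db k) c = 0"
      by (elim dotp_span_right) (use I in \<open>auto simp: dotp_db_b\<close>)
  qed
next
  assume z: "\<forall>k\<in>{1..n} - I. dotp n (db k) c = 0"
  have "vscale (dotp n (db i) c) (b i) \<in> VS.span (b ` I)" if "i \<in> {1..n}" for i
  proof (cases "i \<in> I")
    case True
    then show ?thesis by (intro VS.span_scale VS.span_base imageI)
  next
    case False
    then show ?thesis using that z VS.span_zero by (simp add: VS.scale_zero_left)
  qed
  then have "(\<Sum>i\<in>{1..n}. vscale (dotp n (db i) c) (b i)) \<in> VS.span (b ` I)"
    by (rule VS.span_sum)
  then show "c \<in> VS.span (b ` I)"
    by (subst b_expansion[OF c])
qed

definition idx :: "(nat \<Rightarrow> nat) set \<Rightarrow> nat set" where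
  "idx L = {k \<in> {1..n}. N k \<in> L}"

lemma idx_subset: "idx L \<subseteq> {1..n}"
  by (auto simp: idx_def)

lemma image_N_idx:
  assumes L: "L \<subseteq> Delta m s"
  shows "N ` idx L = L"
proof
  show "L \<subseteq> N ` idx L"
  proof
    fix e assume e: "e \<in> L"
    then have "e \<in> N ` {1..n}" using L image_N by blast
    then obtain k where "k \<in> {1..n}" "e = N k" by blast
    then show "e \<in> N ` idx L" using e by (auto simp: idx_def)
  qed
qed (auto simp: idx_def)

lemma evcode_idx:
  assumes "L \<subseteq> Delta m s"
  shows "evcode m n alpha L = VS.span (b ` idx L)"
proof -
  have "b ` idx L = ev ` N ` idx L" by (simp add: image_image)
  then show ?thesis by (simp add: evcode_eq image_N_idx[OF assms])
qed

lemma card_idx: "L \<subseteq> Delta m s \<Longrightarrow> card (idx L) = card L"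
  using card_image[OF inj_on_subset[OF inj_N idx_subset]] image_N_idx by metis

definition lead :: "(nat \<Rightarrow> 'a) \<Rightarrow> nat" where
  "lead c = Max {k \<in> {1..n}. dotp n (db k) c \<noteq> 0}"

definition dual_lead :: "(nat \<Rightarrow> 'a) \<Rightarrow> nat" where
  "dual_lead c = Min {k \<in> {1..n}. dotp n c (b k) \<noteq> 0}"

lemma lead_nonzero:
  assumes "c \<in> Vn n" "c \<noteq> 0"
  shows "lead c \<in> {1..n}" "dotp n (db (lead c)) c \<noteq> 0"
proof -
  have "{k \<in> {1..n}. dotp n (db k) c \<noteq> 0} \<noteq> {}"
  proof
    assume "{k \<in> {1..n}. dotp n (db k) c \<noteq> 0} = {}"
    then have "c \<in> VS.span (b ` {})" using in_span_b_iff[of "{}" c] assms(1) by blast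
    then show False using assms(2) by (simp add: VS.span_empty)
  qed
  then have "lead c \<in> {k \<in> {1..n}. dotp n (db k) c \<noteq> 0}"
    unfolding lead_def by (intro Max_in) auto
  then show "lead c \<in> {1..n}" "dotp n (db (lead c)) c \<noteq> 0" by auto
qed

lemma lead_greatest:
  assumes "k \<in> {1..n}" "lead c < k"
  shows "dotp n (db k) c = 0"
proof (rule ccontr)
  assume "dotp n (db k) c \<noteq> 0"
  then have "k \<le> lead c" unfolding lead_def using assms(1) by (intro Max_ge) auto
  then show False using assms(2) by simp
qed

lemma dual_lead_nonzero:
  assumes "c \<in> Vn n" "c \<noteq> 0"
  shows "dual_lead c \<in> {1..n}" "dotp n c (b (dual_lead c)) \<noteq> 0"
proof -
  have "{k \<in> {1..n}. dotp n c (b k) \<noteq> 0} \<noteq> {}"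
    using eq_0_if_dotp_b_eq_0 assms by blast
  then have "dual_lead c \<in> {k \<in> {1..n}. dotp n c (b k) \<noteq> 0}"
    unfolding dual_lead_def by (intro Min_in) auto
  then show "dual_lead c \<in> {1..n}" "dotp n c (b (dual_lead c)) \<noteq> 0" by auto
qed

lemma dual_lead_least:
  assumes "k \<in> {1..n}" "k < dual_lead c"
  shows "dotp n c (b k) = 0"
proof (rule ccontr)
  assume "dotp n c (b k) \<noteq> 0"
  then have "dual_lead c \<le> k" unfolding dual_lead_def using assms(1) by (intro Min_le) auto
  then show False using assms(2) by simp
qed

lemma ev_lt_shift_in_span_lower:
  assumes E: "E \<in> monoms m" and i: "i \<in> {1..n}" and h: "h \<in> {1..n}" and "i < h"
    and k: "k \<in> {1..n}" and Nk: "N k = E + N h"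
  shows "ev (E + N i) \<in> VS.span (b ` {i' \<in> {1..n}. i' < k})"
proof (rule ev_in_span_lower[OF _ k])
  show "E + N i \<in> monoms m" using E N_monoms[OF i] by (auto simp: monoms_def)
  show "lt (E + N i) (N k)"
    using lt_add_left[OF N_monoms[OF i] N_monoms[OF h] E] lt_N_iff[OF i h] \<open>i < h\<close> Nk by simp
qed

lemma ev_mult_expansion:
  assumes "c \<in> Vn n"
  shows "ev E * c = (\<Sum>i\<in>{1..n}. vscale (dotp n (db i) c) (ev (E + N i)))"
proof -
  have "ev E * c = (\<Sum>i\<in>{1..n}. ev E * vscale (dotp n (db i) c) (b i))"
    by (subst b_expansion[OF assms]) (rule sum_distrib_left)
  also have "\<dots> = (\<Sum>i\<in>{1..n}. vscale (dotp n (db i) c) (ev (E + N i)))"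
    by (simp only: ev_add mult_vscale)
  finally show ?thesis .
qed

text \<open>Lower terms of \<open>c\<close> stay below \<open>N\<^sub>k\<close> after multiplication by \<open>E\<close>, because the
  monomial order is compatible with multiplication.\<close>
lemma dotp_db_ev_mult:
  assumes c: "c \<in> Vn n" "c \<noteq> 0" and E: "E \<in> monoms m"
    and k: "k \<in> {1..n}" and Nk: "N k = E + N (lead c)"
    and k': "k' \<in> {1..n}" "k \<le> k'"
  shows "dotp n (db k') (ev E * c) = (if k' = k then dotp n (db (lead c)) c else 0)"
proof -
  let ?h = "lead c"
  have h: "?h \<in> {1..n}" using lead_nonzero[OF c] by simp
  have summand: "dotp n (db i) c * dotp n (db k') (ev (E + N i))
      = (if i = ?h then (if k' = k then dotp n (db ?h) c else 0) else 0)" if i: "i \<in> {1..n}" for i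
  proof (cases i ?h rule: linorder_cases)
    case less
    then have "ev (E + N i) \<in> VS.span (b ` {i' \<in> {1..n}. i' < k})"
      using ev_lt_shift_in_span_lower[OF E i h _ k Nk] by simp
    moreover have "k' \<in> {1..n} - {i' \<in> {1..n}. i' < k}" using k' by auto
    ultimately have "dotp n (db k') (ev (E + N i)) = 0"
      using in_span_b_iff[of "{i' \<in> {1..n}. i' < k}" "ev (E + N i)"] ev_Vn by blast
    then show ?thesis using less by simp
  next
    case equal
    then have "ev (E + N i) = b k" using Nk by simp
    then show ?thesis using equal k k' by (simp add: dotp_db_b)
  next
    case greater
    then show ?thesis using lead_greatest[OF i] by simp
  qed
  have "dotp n (db k') (ev E * c) = (\<Sum>i\<in>{1..n}. dotp n (db i) c * dotp n (db k') (ev (E + N i)))"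
    by (simp only: ev_mult_expansion[OF c(1)] dotp_sum_right)
  also have "\<dots> = (if k' = k then dotp n (db ?h) c else 0)"
    using h by (simp add: summand)
  finally show ?thesis .
qed

lemma dotp_ev_mult_b:
  assumes c: "c \<in> Vn n" "c \<noteq> 0" and E: "E \<in> monoms m"
    and k: "k \<in> {1..n}" and Nh: "N (dual_lead c) = E + N k"
    and k': "k' \<in> {1..n}" "k' \<le> k"
  shows "dotp n (ev E * c) (b k') = (if k' = k then dotp n c (b (dual_lead c)) else 0)"
proof -
  let ?h = "dual_lead c"
  have h: "?h \<in> {1..n}" using dual_lead_nonzero[OF c] by simp
  have "dotp n (ev E * c) (b k') = dotp n c (ev (E + N k'))"
    by (simp only: dotp_mult_left ev_add)
  also have "\<dots> = (if k' = k then dotp n c (b ?h) else 0)"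
  proof (cases "k' = k")
    case False
    then have "ev (E + N k') \<in> VS.span (b ` {i \<in> {1..n}. i < ?h})"
      using ev_lt_shift_in_span_lower[OF E k'(1) k _ h Nh] k'(2) by simp
    then have "dotp n c (ev (E + N k')) = 0"
      by (rule dotp_span_right) (auto intro: dual_lead_least)
    then show ?thesis using False by simp
  qed (simp add: Nh)
  finally show ?thesis .
qed

section \<open>Footprint bounds\<close>

lemma exists_shifted_lead:
  assumes c: "c \<in> Vn n" "c \<noteq> 0" and k: "k \<in> {1..n}" and dvd: "mdvd (N (lead c)) (N k)"
  obtains x where "\<And>j. c j = 0 \<Longrightarrow> x j = 0" "dotp n (db k) x \<noteq> 0"
    "\<And>k'. k' \<in> {1..n} \<Longrightarrow> k < k' \<Longrightarrow> dotp n (db k') x = 0"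
proof
  define E where "E = (\<lambda>i. N k i - N (lead c) i)"
  have E: "E \<in> monoms m" "N k = E + N (lead c)"
    using N_monoms[OF k] dvd by (auto simp: E_def monoms_def mdvd_def fun_eq_iff)
  note coord = dotp_db_ev_mult[OF c E(1) k E(2)]
  show "dotp n (db k) (ev E * c) \<noteq> 0"
    using coord[OF k order_refl] lead_nonzero(2)[OF c] by simp
  show "dotp n (db k') (ev E * c) = 0" if "k' \<in> {1..n}" "k < k'" for k'
    using coord[of k'] that by simp
qed simp

lemma exists_shifted_dual_lead:
  assumes c: "c \<in> Vn n" "c \<noteq> 0" and k: "k \<in> {1..n}" and dvd: "mdvd (N k) (N (dual_lead c))"
  obtains x where "\<And>j. c j = 0 \<Longrightarrow> x j = 0" "dotp n x (b k) \<noteq> 0"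
    "\<And>k'. k' \<in> {1..n} \<Longrightarrow> k' < k \<Longrightarrow> dotp n x (b k') = 0"
proof
  define E where "E = (\<lambda>i. N (dual_lead c) i - N k i)"
  have E: "E \<in> monoms m" "N (dual_lead c) = E + N k"
    using N_monoms[OF dual_lead_nonzero(1)[OF c]] dvd
    by (auto simp: E_def monoms_def mdvd_def fun_eq_iff)
  note coord = dotp_ev_mult_b[OF c E(1) k E(2)]
  show "dotp n (ev E * c) (b k) \<noteq> 0"
    using coord[OF k order_refl] dual_lead_nonzero(2)[OF c] by simp
  show "dotp n (ev E * c) (b k') = 0" if "k' \<in> {1..n}" "k' < k" for k'
    using coord[of k'] that by simp
qed simp

lemma card_multiples_le_card_supp:
  assumes U: "U \<subseteq> Vn n" and H': "H' \<subseteq> lead ` (U - {0})"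
  shows "card {k \<in> {1..n}. \<exists>h\<in>H'. mdvd (N h) (N k)} \<le> card (supp U)"
proof -
  define D where "D = {k \<in> {1..n}. \<exists>h\<in>H'. mdvd (N h) (N k)}"
  have "\<forall>k\<in>D. \<exists>x. (\<forall>j. j \<notin> supp U \<longrightarrow> x j = 0) \<and> dotp n (db k) x \<noteq> 0
                  \<and> (\<forall>k'\<in>{1..n}. k < k' \<longrightarrow> dotp n (db k') x = 0)"
  proof
    fix k assume "k \<in> D"
    then obtain c where c: "c \<in> U" "c \<noteq> 0" "mdvd (N (lead c)) (N k)" "k \<in> {1..n}"
      using H' by (auto simp: D_def)
    then have "\<And>j. j \<notin> supp U \<Longrightarrow> c j = 0" by (auto simp: supp_def)
    moreover obtain x where "\<And>j. c j = 0 \<Longrightarrow> x j = 0" "dotp n (db k) x \<noteq> 0"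
      "\<And>k'. k' \<in> {1..n} \<Longrightarrow> k < k' \<Longrightarrow> dotp n (db k') x = 0"
      using exists_shifted_lead[of c k] c U by blast
    ultimately show "\<exists>x. (\<forall>j. j \<notin> supp U \<longrightarrow> x j = 0) \<and> dotp n (db k) x \<noteq> 0
                  \<and> (\<forall>k'\<in>{1..n}. k < k' \<longrightarrow> dotp n (db k') x = 0)" by blast
  qed
  then obtain x where x: "\<forall>k\<in>D. (\<forall>j. j \<notin> supp U \<longrightarrow> x k j = 0) \<and> dotp n (db k) (x k) \<noteq> 0
                  \<and> (\<forall>k'\<in>{1..n}. k < k' \<longrightarrow> dotp n (db k') (x k) = 0)"
    by (metis bchoice)
  have "card D \<le> card (supp U)"
    by (rule card_le_card_if_triangular_supported[where x = x and g = db and w = id and n = n])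
      (use x finite_supp[OF U] in \<open>auto simp: D_def\<close>)
  then show ?thesis by (simp add: D_def)
qed

lemma card_divisors_le_card_supp:
  assumes U: "U \<subseteq> Vn n" and H': "H' \<subseteq> dual_lead ` (U - {0})"
  shows "card {k \<in> {1..n}. \<exists>h\<in>H'. mdvd (N k) (N h)} \<le> card (supp U)"
proof -
  define D where "D = {k \<in> {1..n}. \<exists>h\<in>H'. mdvd (N k) (N h)}"
  have "\<forall>k\<in>D. \<exists>x. (\<forall>j. j \<notin> supp U \<longrightarrow> x j = 0) \<and> dotp n x (b k) \<noteq> 0
                  \<and> (\<forall>k'\<in>{1..n}. k' < k \<longrightarrow> dotp n x (b k') = 0)"
  proof
    fix k assume "k \<in> D"
    then obtain c where c: "c \<in> U" "c \<noteq> 0" "mdvd (N k) (N (dual_lead c))" "k \<in> {1..n}"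
      using H' by (auto simp: D_def)
    then have "\<And>j. j \<notin> supp U \<Longrightarrow> c j = 0" by (auto simp: supp_def)
    moreover obtain x where "\<And>j. c j = 0 \<Longrightarrow> x j = 0" "dotp n x (b k) \<noteq> 0"
      "\<And>k'. k' \<in> {1..n} \<Longrightarrow> k' < k \<Longrightarrow> dotp n x (b k') = 0"
      using exists_shifted_dual_lead[of c k] c U by blast
    ultimately show "\<exists>x. (\<forall>j. j \<notin> supp U \<longrightarrow> x j = 0) \<and> dotp n x (b k) \<noteq> 0
                  \<and> (\<forall>k'\<in>{1..n}. k' < k \<longrightarrow> dotp n x (b k') = 0)"
      by blast
  qed
  then obtain x where x: "\<forall>k\<in>D. (\<forall>j. j \<notin> supp U \<longrightarrow> x k j = 0) \<and> dotp n (x k) (b k) \<noteq> 0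
                  \<and> (\<forall>k'\<in>{1..n}. k' < k \<longrightarrow> dotp n (x k) (b k') = 0)"
    by (metis bchoice)
  have "inj_on (\<lambda>k. n - k) D"
    by (rule inj_onI) (auto simp: D_def)
  moreover have "k' < k" if "k \<in> D" "k' \<in> D" "n - k < n - k'" for k k'
    using that by (auto simp: D_def)
  ultimately have "card D \<le> card (supp U)"
    by (intro card_le_card_if_triangular_supported[where x = x and g = b and w = "\<lambda>k. n - k" and n = n])
      (use x finite_supp[OF U] in \<open>auto simp: D_def dotp_commute[of n "b _"]\<close>)
  then show ?thesis by (simp add: D_def)
qed

lemma dim_le_card_lead:
  assumes "VS.subspace U" "U \<subseteq> Vn n"
  shows "fdim U \<le> card (lead ` (U - {0}))"
proof (rule dim_le_card_if_separating[where g = db and n = n, OF assms(1)])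
  show "finite (lead ` (U - {0}))"
  proof (rule finite_subset)
    show "lead ` (U - {0}) \<subseteq> {1..n}" using lead_nonzero(1) assms(2) by blast
  qed simp
  show "\<exists>k\<in>lead ` (U - {0}). dotp n (db k) c \<noteq> 0" if "c \<in> U" "c \<noteq> 0" for c
    using lead_nonzero(2)[of c] that assms(2) by blast
qed

lemma dim_le_card_dual_lead:
  assumes "VS.subspace U" "U \<subseteq> Vn n"
  shows "fdim U \<le> card (dual_lead ` (U - {0}))"
proof (rule dim_le_card_if_separating[where g = b and n = n, OF assms(1)])
  show "finite (dual_lead ` (U - {0}))"
  proof (rule finite_subset)
    show "dual_lead ` (U - {0}) \<subseteq> {1..n}" using dual_lead_nonzero(1) assms(2) by blast
  qed simp
  show "\<exists>k\<in>dual_lead ` (U - {0}). dotp n (b k) c \<noteq> 0" if "c \<in> U" "c \<noteq> 0" for c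
    using dual_lead_nonzero(2)[of c] that assms(2) by (auto simp: dotp_commute)
qed

lemma DK_image_N:
  assumes "H \<subseteq> {1..n}"
  shows "DK m s (N ` H) = card {k \<in> {1..n}. \<exists>h\<in>H. mdvd (N h) (N k)}"
proof -
  have "{e \<in> Delta m s. \<exists>M\<in>N ` H. mdvd M e} = N ` {k \<in> {1..n}. \<exists>h\<in>H. mdvd (N h) (N k)}"
  proof
    show "{e \<in> Delta m s. \<exists>M\<in>N ` H. mdvd M e} \<subseteq> N ` {k \<in> {1..n}. \<exists>h\<in>H. mdvd (N h) (N k)}"
    proof
      fix e assume e: "e \<in> {e \<in> Delta m s. \<exists>M\<in>N ` H. mdvd M e}"
      then have "e \<in> N ` {1..n}" using image_N by blast
      with e show "e \<in> N ` {k \<in> {1..n}. \<exists>h\<in>H. mdvd (N h) (N k)}" by blast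
    qed
  qed (use N_Delta in auto)
  then show ?thesis
    unfolding DK_def by (simp only:) (intro card_image inj_on_subset[OF inj_N], auto)
qed

lemma DKperp_image_N:
  assumes "H \<subseteq> {1..n}"
  shows "DKperp m s (N ` H) = card {k \<in> {1..n}. \<exists>h\<in>H. mdvd (N k) (N h)}"
proof -
  have "{e \<in> Delta m s. \<exists>M\<in>N ` H. mdvd e M} = N ` {k \<in> {1..n}. \<exists>h\<in>H. mdvd (N k) (N h)}"
  proof
    show "{e \<in> Delta m s. \<exists>M\<in>N ` H. mdvd e M} \<subseteq> N ` {k \<in> {1..n}. \<exists>h\<in>H. mdvd (N k) (N h)}"
    proof
      fix e assume e: "e \<in> {e \<in> Delta m s. \<exists>M\<in>N ` H. mdvd e M}"
      then have "e \<in> N ` {1..n}" using image_N by blast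
      with e show "e \<in> N ` {k \<in> {1..n}. \<exists>h\<in>H. mdvd (N k) (N h)}" by blast
    qed
  qed (use N_Delta in auto)
  then show ?thesis
    unfolding DKperp_def by (simp only:) (intro card_image inj_on_subset[OF inj_N], auto)
qed

lemma lead_in_gap:
  assumes L: "L2 \<subseteq> L1" "L1 \<subseteq> Delta m s"
    and c: "c \<in> evcode m n alpha L1" "c \<notin> evcode m n alpha L2"
  shows "N (lead c) \<in> L1" "Min {i \<in> {1..n}. N i \<in> L1 - L2} \<le> lead c"
proof -
  have L2: "L2 \<subseteq> Delta m s" using L by blast
  have cV: "c \<in> Vn n" using c(1) evcode_subset_Vn by blast
  have "c \<noteq> 0" using c(2) by (auto simp: evcode_eq VS.span_zero)
  note lead_c = lead_nonzero[OF cV this]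
  have in_L1: "k \<in> idx L1" if "k \<in> {1..n}" "dotp n (db k) c \<noteq> 0" for k
    using c(1) in_span_b_iff[OF idx_subset cV] that by (auto simp: evcode_idx[OF L(2)])
  show "N (lead c) \<in> L1" using in_L1[OF lead_c] by (simp add: idx_def)
  show "Min {i \<in> {1..n}. N i \<in> L1 - L2} \<le> lead c"
  proof (rule ccontr)
    assume below: "\<not> ?thesis"
    have "dotp n (db k) c = 0" if "k \<in> {1..n} - idx L2" for k
    proof (rule ccontr)
      assume nz: "dotp n (db k) c \<noteq> 0"
      then have "k \<in> {i \<in> {1..n}. N i \<in> L1 - L2}"
        using in_L1[of k] that by (auto simp: idx_def)
      then have "Min {i \<in> {1..n}. N i \<in> L1 - L2} \<le> k" by (intro Min_le) auto
      moreover have "k \<le> lead c" using lead_greatest[of k c] that nz by force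
      ultimately show False using below by simp
    qed
    then have "c \<in> evcode m n alpha L2"
      using in_span_b_iff[OF idx_subset cV] by (simp add: evcode_idx[OF L2])
    then show False using c(2) by simp
  qed
qed

lemma dual_lead_in_gap:
  assumes L: "L2 \<subseteq> L1" "L1 \<subseteq> Delta m s"
    and c: "c \<in> dual n (evcode m n alpha L2)" "c \<notin> dual n (evcode m n alpha L1)"
  shows "N (dual_lead c) \<notin> L2" "dual_lead c \<le> Max {i \<in> {1..n}. N i \<in> L1}"
proof -
  have cV: "c \<in> Vn n" using c(1) by (simp add: dual_eq)
  have "c \<noteq> 0" using c(2) by (auto simp: dual_eq Vn_def dotp_def)
  note dl = dual_lead_nonzero[OF cV this]
  show "N (dual_lead c) \<notin> L2"
  proof
    assume "N (dual_lead c) \<in> L2"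
    then have "b (dual_lead c) \<in> evcode m n alpha L2"
      by (auto simp: evcode_eq intro: VS.span_base)
    then show False using c(1) dl(2) by (simp add: dual_eq)
  qed
  obtain x where x: "x \<in> evcode m n alpha L1" "dotp n c x \<noteq> 0"
    using c cV by (auto simp: dual_eq)
  obtain k where k: "k \<in> idx L1" "dotp n c (b k) \<noteq> 0"
    using x dotp_span_right[of x "b ` idx L1" n c] by (auto simp: evcode_idx[OF L(2)])
  have "dual_lead c \<le> k"
    using dual_lead_least[of k c] k idx_subset by force
  also have "k \<le> Max {i \<in> {1..n}. N i \<in> L1}"
    using k(1) by (intro Max_ge) (auto simp: idx_def)
  finally show "dual_lead c \<le> Max {i \<in> {1..n}. N i \<in> L1}" .
qed

lemma footprint_bound:
  assumes L: "L2 \<subset> L1" "L1 \<subseteq> Delta m s"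
    and U: "VS.subspace U" "U \<subseteq> evcode m n alpha L1" "U \<inter> evcode m n alpha L2 = {0}"
  shows "\<exists>K. K \<subseteq> N ` {Min {i \<in> {1..n}. N i \<in> L1 - L2}..n} \<inter> L1 \<and> card K = fdim U
             \<and> DK m s K \<le> card (supp U)"
proof -
  let ?u = "Min {i \<in> {1..n}. N i \<in> L1 - L2}"
  have UV: "U \<subseteq> Vn n" using U(2) evcode_subset_Vn by blast
  have gap: "h \<in> {?u..n} \<and> N h \<in> L1" if h: "h \<in> lead ` (U - {0})" for h
  proof -
    obtain c where c: "c \<in> U" "c \<noteq> 0" "h = lead c" using h by blast
    have nc: "c \<notin> evcode m n alpha L2" using c U(3) by blast
    show ?thesis
      using lead_in_gap[OF _ L(2) _ nc] lead_nonzero(1)[of c] c U(2) UV L(1) by auto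
  qed
  obtain H' where H': "H' \<subseteq> lead ` (U - {0})" "card H' = fdim U"
    using obtain_subset_with_card_n[OF dim_le_card_lead[OF U(1) UV]] by metis
  have H'n: "H' \<subseteq> {1..n}"
  proof
    fix h assume "h \<in> H'"
    then obtain c where "c \<in> U" "c \<noteq> 0" "h = lead c" using H'(1) by blast
    then show "h \<in> {1..n}" using lead_nonzero(1)[of c] UV by blast
  qed
  show ?thesis
  proof (intro exI conjI)
    show "N ` H' \<subseteq> N ` {?u..n} \<inter> L1" using H'(1) gap by blast
    show "card (N ` H') = fdim U" using card_image[OF inj_on_subset[OF inj_N H'n]] H'(2) by simp
    show "DK m s (N ` H') \<le> card (supp U)"
      using DK_image_N[OF H'n] card_multiples_le_card_supp[OF UV H'(1)] by simp
  qed
qed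

lemma dual_footprint_bound:
  assumes L: "L2 \<subset> L1" "L1 \<subseteq> Delta m s"
    and U: "VS.subspace U" "U \<subseteq> dual n (evcode m n alpha L2)"
      "U \<inter> dual n (evcode m n alpha L1) = {0}"
  shows "\<exists>K. K \<subseteq> N ` {1..Max {i \<in> {1..n}. N i \<in> L1}} - L2 \<and> card K = fdim U
             \<and> DKperp m s K \<le> card (supp U)"
proof -
  let ?u = "Max {i \<in> {1..n}. N i \<in> L1}"
  have UV: "U \<subseteq> Vn n" using U(2) by (auto simp: dual_eq)
  have gap: "h \<in> {1..?u} \<and> N h \<notin> L2" if h: "h \<in> dual_lead ` (U - {0})" for h
  proof -
    obtain c where c: "c \<in> U" "c \<noteq> 0" "h = dual_lead c" using h by blast
    have nc: "c \<notin> dual n (evcode m n alpha L1)" using c U(3) by blast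
    show ?thesis
      using dual_lead_in_gap[OF _ L(2) _ nc] dual_lead_nonzero(1)[of c] c U(2) UV L(1) by auto
  qed
  obtain H' where H': "H' \<subseteq> dual_lead ` (U - {0})" "card H' = fdim U"
    using obtain_subset_with_card_n[OF dim_le_card_dual_lead[OF U(1) UV]] by metis
  have H'n: "H' \<subseteq> {1..n}"
  proof
    fix h assume "h \<in> H'"
    then obtain c where "c \<in> U" "c \<noteq> 0" "h = dual_lead c" using H'(1) by blast
    then show "h \<in> {1..n}" using dual_lead_nonzero(1)[of c] UV by blast
  qed
  show ?thesis
  proof (intro exI conjI)
    show "N ` H' \<subseteq> N ` {1..?u} - L2" using H'(1) gap by blast
    show "card (N ` H') = fdim U" using card_image[OF inj_on_subset[OF inj_N H'n]] H'(2) by simp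
    show "DKperp m s (N ` H') \<le> card (supp U)"
      using DKperp_image_N[OF H'n] card_divisors_le_card_supp[OF UV H'(1)] by simp
  qed
qed

lemma exists_gap_indices:
  assumes L: "L2 \<subset> L1" "L1 \<subseteq> Delta m s" and v: "v \<le> card L1 - card L2"
  obtains I where "I \<subseteq> idx L1" "I \<inter> idx L2 = {}" "card I = v"
proof -
  have fin: "finite L1" using finite_subset[OF L(2) finite_Delta] .
  have "card (idx (L1 - L2)) = card (L1 - L2)"
    by (rule card_idx) (use L(2) in blast)
  also have "\<dots> = card L1 - card L2"
    by (rule card_Diff_subset[OF finite_subset[OF psubset_imp_subset[OF L(1)] fin]])
      (rule psubset_imp_subset[OF L(1)])
  finally have "v \<le> card (idx (L1 - L2))" using v by simp
  then obtain I where I: "I \<subseteq> idx (L1 - L2)" "card I = v" "finite I"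
    by (rule obtain_subset_with_card_n)
  show thesis
  proof (rule that)
    show "I \<subseteq> idx L1" "I \<inter> idx L2 = {}" using I(1) unfolding idx_def by blast+
  qed (fact I(2))
qed

lemma exists_complement_subspace:
  assumes L: "L2 \<subset> L1" "L1 \<subseteq> Delta m s" and v: "v \<le> card L1 - card L2"
  shows "\<exists>U. VS.subspace U \<and> U \<subseteq> evcode m n alpha L1 \<and> fdim U = v
             \<and> U \<inter> evcode m n alpha L2 = {0}"
proof -
  have L2: "L2 \<subseteq> Delta m s" using L by blast
  obtain I where I: "I \<subseteq> idx L1" "I \<inter> idx L2 = {}" "card I = v"
    using exists_gap_indices[OF L v] .
  have In: "I \<subseteq> {1..n}" using I(1) idx_subset by blast
  have indep: "VS.independent (b ` I)"
    by (rule VS.independent_mono[OF independent_b image_mono[OF In]])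
  show ?thesis
  proof (intro exI conjI)
    show "VS.subspace (VS.span (b ` I))" by (rule VS.subspace_span)
    show "VS.span (b ` I) \<subseteq> evcode m n alpha L1"
      unfolding evcode_idx[OF L(2)] using I(1) by (intro VS.span_mono image_mono)
    show "fdim (VS.span (b ` I)) = v"
      using VS.dim_span_eq_card_independent[OF indep] card_image[OF inj_on_subset[OF inj_b In]] I(3)
      by simp
    show "VS.span (b ` I) \<inter> evcode m n alpha L2 = {0}"
    proof (intro equalityI subsetI)
      fix x assume x: "x \<in> VS.span (b ` I) \<inter> evcode m n alpha L2"
      then have xV: "x \<in> Vn n" using evcode_subset_Vn by blast
      have x1: "\<forall>k\<in>{1..n} - I. dotp n (db k) x = 0"
        using x in_span_b_iff[OF In xV] by blast
      have x2: "\<forall>k\<in>{1..n} - idx L2. dotp n (db k) x = 0"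
        using x in_span_b_iff[OF idx_subset xV] evcode_idx[OF L2] by blast
      have "\<forall>k\<in>{1..n} - {}. dotp n (db k) x = 0"
        using x1 x2 I(2) by blast
      then have "x \<in> VS.span (b ` {})" using in_span_b_iff[of "{}" x] xV by blast
      then show "x \<in> {0}" by (simp add: VS.span_empty)
    next
      fix x :: "nat \<Rightarrow> 'a" assume "x \<in> {0}"
      then show "x \<in> VS.span (b ` I) \<inter> evcode m n alpha L2"
        by (simp add: VS.span_zero evcode_eq)
    qed
  qed
qed

lemma dotp_span_db_b:
  assumes I: "I \<subseteq> {1..n}" and x: "x \<in> VS.span (db ` I)" and k: "k \<in> {1..n} - I"
  shows "dotp n x (b k) = 0"
proof -
  have "dotp n (b k) x = 0"
  proof (rule dotp_span_right[OF x])
    fix a assume "a \<in> db ` I"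
    then obtain i where "i \<in> I" "a = db i" by blast
    then show "dotp n (b k) a = 0" using dotp_db_b[of i k] I k by (auto simp: dotp_commute)
  qed
  then show ?thesis by (simp add: dotp_commute)
qed

lemma db_in_dual_evcode:
  assumes L: "L \<subseteq> Delta m s" and i: "i \<in> {1..n} - idx L"
  shows "db i \<in> dual n (evcode m n alpha L)"
proof -
  have "dotp n (db i) x = 0" if "x \<in> evcode m n alpha L" for x
  proof (rule dotp_span_right)
    show "x \<in> VS.span (b ` idx L)" using that evcode_idx[OF L] by blast
    show "dotp n (db i) a = 0" if "a \<in> b ` idx L" for a
      using that i idx_subset dotp_db_b by fastforce
  qed
  then show ?thesis using db_Vn i by (simp add: dual_eq)
qed

lemma exists_dual_complement_subspace:
  assumes L: "L2 \<subset> L1" "L1 \<subseteq> Delta m s" and v: "v \<le> card L1 - card L2"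
  shows "\<exists>U. VS.subspace U \<and> U \<subseteq> dual n (evcode m n alpha L2) \<and> fdim U = v
             \<and> U \<inter> dual n (evcode m n alpha L1) = {0}"
proof -
  have L2: "L2 \<subseteq> Delta m s" using L by blast
  obtain I where I: "I \<subseteq> idx L1" "I \<inter> idx L2 = {}" "card I = v"
    using exists_gap_indices[OF L v] .
  have In: "I \<subseteq> {1..n}" using I(1) idx_subset by blast
  have indep: "VS.independent (db ` I)"
    by (rule VS.independent_mono[OF independent_db image_mono[OF In]])
  show ?thesis
  proof (intro exI conjI)
    show "VS.subspace (VS.span (db ` I))" by (rule VS.subspace_span)
    show "VS.span (db ` I) \<subseteq> dual n (evcode m n alpha L2)"
      using db_in_dual_evcode[OF L2] In I(2) by (intro VS.span_minimal subspace_dual) blast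
    show "fdim (VS.span (db ` I)) = v"
      using VS.dim_span_eq_card_independent[OF indep] card_image[OF inj_on_subset[OF inj_db In]] I(3)
      by simp
    show "VS.span (db ` I) \<inter> dual n (evcode m n alpha L1) = {0}"
    proof (intro equalityI subsetI)
      fix x assume x: "x \<in> VS.span (db ` I) \<inter> dual n (evcode m n alpha L1)"
      have "dotp n x (b k) = 0" if "k \<in> {1..n}" for k
      proof (cases "k \<in> I")
        case True
        then have "b k \<in> evcode m n alpha L1"
          using I(1) evcode_idx[OF L(2)] by (auto intro: VS.span_base)
        then show ?thesis using x by (simp add: dual_eq)
      qed (use x that dotp_span_db_b[OF In] in blast)
      moreover have "x \<in> Vn n" using x by (simp add: dual_eq)
      ultimately show "x \<in> {0}" using eq_0_if_dotp_b_eq_0 by simp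
    next
      fix x :: "nat \<Rightarrow> 'a" assume "x \<in> {0}"
      then show "x \<in> VS.span (db ` I) \<inter> dual n (evcode m n alpha L1)"
        using VS.subspace_0[OF subspace_dual] by (simp add: VS.span_zero)
    qed
  qed
qed

lemma RGHW_evcode_ge:
  assumes L: "L2 \<subset> L1" "L1 \<subseteq> Delta m s" and v: "v \<le> card L1 - card L2"
  shows "Min {DK m s K | K. K \<subseteq> N ` {Min {i \<in> {1..n}. N i \<in> L1 - L2}..n} \<inter> L1 \<and> card K = v}
           \<le> RGHW n v (evcode m n alpha L1) (evcode m n alpha L2)"
  unfolding RGHW_def
proof (rule Min_le_Min_if_dominated)
  let ?F = "N ` {Min {i \<in> {1..n}. N i \<in> L1 - L2}..n} \<inter> L1"
  let ?A = "{card (supp U) | U. fsubspace U \<and> U \<subseteq> evcode m n alpha L1 \<and> fdim U = v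
                                \<and> U \<inter> evcode m n alpha L2 = {0}}"
  have "{DK m s K | K. K \<subseteq> ?F \<and> card K = v} \<subseteq> DK m s ` Pow ?F" by blast
  then show "finite {DK m s K | K. K \<subseteq> ?F \<and> card K = v}"
    by (rule finite_subset) simp
  have "card (supp U) \<le> n" if "U \<subseteq> evcode m n alpha L1" for U
    using card_mono[OF finite_lessThan supp_subset_Vn[OF subset_trans[OF that evcode_subset_Vn]]]
    by simp
  then have "?A \<subseteq> {..n}" by auto
  then show "finite ?A" by (rule finite_subset) simp
  show "?A \<noteq> {}"
    using exists_complement_subspace[OF L v] by blast
  fix a assume "a \<in> ?A"
  then obtain U where U: "a = card (supp U)" "fsubspace U" "U \<subseteq> evcode m n alpha L1"
    "fdim U = v" "U \<inter> evcode m n alpha L2 = {0}" by blast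
  obtain K where "K \<subseteq> ?F" "card K = fdim U" "DK m s K \<le> card (supp U)"
    using footprint_bound[OF L U(2,3,5)] by blast
  then show "\<exists>d\<in>{DK m s K | K. K \<subseteq> ?F \<and> card K = v}. d \<le> a"
    using U(1,4) by blast
qed

lemma RGHW_dual_evcode_ge:
  assumes L: "L2 \<subset> L1" "L1 \<subseteq> Delta m s" and v: "v \<le> card L1 - card L2"
  shows "Min {DKperp m s K | K. K \<subseteq> N ` {1..Max {i \<in> {1..n}. N i \<in> L1}} - L2 \<and> card K = v}
           \<le> RGHW n v (dual n (evcode m n alpha L2)) (dual n (evcode m n alpha L1))"
  unfolding RGHW_def
proof (rule Min_le_Min_if_dominated)
  let ?F = "N ` {1..Max {i \<in> {1..n}. N i \<in> L1}} - L2"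
  let ?A = "{card (supp U) | U. fsubspace U \<and> U \<subseteq> dual n (evcode m n alpha L2) \<and> fdim U = v
                                \<and> U \<inter> dual n (evcode m n alpha L1) = {0}}"
  have "{DKperp m s K | K. K \<subseteq> ?F \<and> card K = v} \<subseteq> DKperp m s ` Pow ?F" by blast
  then show "finite {DKperp m s K | K. K \<subseteq> ?F \<and> card K = v}"
    by (rule finite_subset) simp
  have "card (supp U) \<le> n" if U: "U \<subseteq> dual n (evcode m n alpha L2)" for U
  proof -
    have UV: "U \<subseteq> Vn n" using U by (auto simp: dual_eq)
    show ?thesis using card_mono[OF finite_lessThan supp_subset_Vn[OF UV]] by simp
  qed
  then have "?A \<subseteq> {..n}" by auto
  then show "finite ?A" by (rule finite_subset) simp
  show "?A \<noteq> {}"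
    using exists_dual_complement_subspace[OF L v] by blast
  fix a assume "a \<in> ?A"
  then obtain U where U: "a = card (supp U)" "fsubspace U" "U \<subseteq> dual n (evcode m n alpha L2)"
    "fdim U = v" "U \<inter> dual n (evcode m n alpha L1) = {0}" by blast
  obtain K where "K \<subseteq> ?F" "card K = fdim U" "DKperp m s K \<le> card (supp U)"
    using dual_footprint_bound[OF L U(2,3,5)] by blast
  then show "\<exists>d\<in>{DKperp m s K | K. K \<subseteq> ?F \<and> card K = v}. d \<le> a"
    using U(1,4) by blast
qed

end

theorem mainTheorem1:
  fixes m n :: nat
    and s :: "nat \<Rightarrow> nat"
    and S :: "nat \<Rightarrow> 'a::{finite,field} set"
    and alpha :: "nat \<Rightarrow> nat \<Rightarrow> 'a"
    and lt :: "(nat \<Rightarrow> nat) \<Rightarrow> (nat \<Rightarrow> nat) \<Rightarrow> bool"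
    and N :: "nat \<Rightarrow> (nat \<Rightarrow> nat)"
    and L1 L2 :: "(nat \<Rightarrow> nat) set"
  assumes S_ne: "\<forall>i<m. S i \<noteq> {}"
    and s_def: "\<forall>i<m. s i = card (S i)"
    and n_def: "n = (\<Prod>i<m. s i)"
    and alpha_enum: "bij_betw alpha {..<n} (PiE {..<m} S)"
    and mono_ord: "monomial_order m lt"
    and N_enum: "bij_betw N {1..n} (Delta m s)"
    and N_sorted: "\<forall>i\<in>{1..n}. \<forall>j\<in>{1..n}. i < j \<longrightarrow> lt (N i) (N j)"
    and L2_L1: "L2 \<subset> L1"
    and L1_Delta: "L1 \<subseteq> Delta m s"
  shows "evcode m n alpha L1 \<subseteq> Vn n \<and> evcode m n alpha L2 \<subseteq> Vn n
       \<and> evcode m n alpha L2 \<subset> evcode m n alpha L1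
       \<and> int (fdim (evcode m n alpha L1)) - int (fdim (evcode m n alpha L2))
           = int (card L1) - int (card L2)
       \<and> (let u = Min {i \<in> {1..n}. N i \<in> L1 - L2};
              uperp = Max {i \<in> {1..n}. N i \<in> L1}
          in \<forall>v \<in> {1..card L1 - card L2}.
               RGHW n v (evcode m n alpha L1) (evcode m n alpha L2)
                 \<ge> Min {DK m s K | K. K \<subseteq> N ` {u..n} \<inter> L1 \<and> card K = v}
             \<and> RGHW n v (dual n (evcode m n alpha L2)) (dual n (evcode m n alpha L1))
                 \<ge> Min {DKperp m s K | K. K \<subseteq> N ` {1..uperp} - L2 \<and> card K = v})"
proof -
  interpret affine_variety_code m n s S alpha lt N
    using s_def alpha_enum mono_ord N_enum N_sorted by unfold_locales
  have L2: "L2 \<subseteq> Delta m s" using L2_L1 L1_Delta by blast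
  have dims: "fdim (evcode m n alpha L1) = card L1" "fdim (evcode m n alpha L2) = card L2"
    using dim_evcode[OF L1_Delta] dim_evcode[OF L2] .
  have "card L2 < card L1"
    using psubset_card_mono[OF finite_subset[OF L1_Delta finite_Delta] L2_L1] .
  moreover have "evcode m n alpha L2 \<subseteq> evcode m n alpha L1"
    unfolding evcode_eq using L2_L1 by (intro VS.span_mono image_mono) blast
  ultimately have "evcode m n alpha L2 \<subset> evcode m n alpha L1"
    using dims by auto
  then show ?thesis
    using evcode_subset_Vn dims RGHW_evcode_ge[OF L2_L1 L1_Delta] RGHW_dual_evcode_ge[OF L2_L1 L1_Delta]
    by (auto simp: Let_def)
qed

end
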